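(* Let $Q_n=[-\tfrac12,\tfrac12]^n$ and let $W_{Q_n}=\sup_{t\in Q_n}\langle U,t\rangle-\inf_{t\in Q_n}\langle U,t\rangle$, where $U$ is uniformly distributed on the unit sphere $\mathbb{S}^{n-1}\subset\mathbb{R}^n$. Then, as $n\to\infty$, $$W_{Q_n} - \sqrt{\frac{2n}{\pi}} \to \mathcal{N}\left(0, \frac{\pi-3}{\pi}\right)$$ in distribution.
   Context: $\mathcal{N}(0,s^2)$ denotes the centered normal distribution with variance $s^2$. *)

theory Defs
  imports "HOL-Probability.Probability"
begin

text \<open>Euclidean space R^n modelled as functions on the index set {..<n}
  (extensional), with product Lebesgue measure.\<close>

definition Rn :: "nat \<Rightarrow> (nat \<Rightarrow> real) measure" where
  "Rn n = PiM {..<n} (\<lambda>_. lborel)"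

definition euclid_norm :: "nat \<Rightarrow> (nat \<Rightarrow> real) \<Rightarrow> real" where
  "euclid_norm n x = sqrt (\<Sum>i<n. (x i)\<^sup>2)"

definition inner_n :: "nat \<Rightarrow> (nat \<Rightarrow> real) \<Rightarrow> (nat \<Rightarrow> real) \<Rightarrow> real" where
  "inner_n n x y = (\<Sum>i<n. x i * y i)"

definition unit_ball_n :: "nat \<Rightarrow> (nat \<Rightarrow> real) set" where
  "unit_ball_n n = {x \<in> space (Rn n). euclid_norm n x \<le> 1}"

text \<open>Uniform (normalized surface) measure on the unit sphere S^{n-1}, defined as the
  cone measure: sigma(A) = vol{r x. x \<in> A, 0 \<le> r \<le> 1} / vol(B^n), i.e. the image of the
  uniform distribution on the unit ball under radial projection x \<mapsto> x/|x|.\<close>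

definition uniform_sphere :: "nat \<Rightarrow> (nat \<Rightarrow> real) measure" where
  "uniform_sphere n =
     distr (uniform_measure (Rn n) (unit_ball_n n)) (Rn n)
           (\<lambda>x. \<lambda>i\<in>{..<n}. x i / euclid_norm n x)"

definition cube_n :: "nat \<Rightarrow> (nat \<Rightarrow> real) set" where
  "cube_n n = PiE {..<n} (\<lambda>_. {-1/2..1/2})"

definition width_cube :: "nat \<Rightarrow> (nat \<Rightarrow> real) \<Rightarrow> real" where
  "width_cube n u = (SUP t\<in>cube_n n. inner_n n u t) - (INF t\<in>cube_n n. inner_n n u t)"

end

theory Submission
  imports Defs
begin

text \<open>The width of the cube in direction \<open>U\<close> is \<open>\<Sum>i. \<bar>U i\<bar>\<close>. The uniform measure on the
  sphere, defined as a cone measure, is the law of \<open>U = G / \<bar>G\<bar>\<close> for a standard Gaussian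
  vector \<open>G\<close>: the Gaussian measure of a cone is proportional to the volume of its truncation by
  the unit ball, since all superlevel sets of the Gaussian density are balls.
  With \<open>m = E\<bar>g\<bar> = sqrt (2/pi)\<close>, write \<open>\<Sum>i. \<bar>G i\<bar> = n m + A\<close> and \<open>\<bar>G\<bar>\<^sup>2 = n + C\<close> with
  centred sums \<open>A\<close> and \<open>C\<close>; a second order expansion of the square root gives
  \<open>W - m sqrt n = (A - (m/2) C) / sqrt n + O ((A\<^sup>2 + C\<^sup>2) / n powr (3/2))\<close>.
  The leading term is a normalised sum of i.i.d. centred variables
  \<open>\<bar>g\<bar> - m - (m/2) (g\<^sup>2 - 1)\<close> of variance \<open>1 - 3 m\<^sup>2 / 2 = (pi - 3) / pi\<close>, so the central
  limit theorem applies; the error term tends to \<open>0\<close> in probability by Chebyshev's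
  inequality, and Slutsky's argument concludes.\<close>

lemma width_cube_eq_sum_abs: "width_cube n u = (\<Sum>i<n. \<bar>u i\<bar>)"
proof -
  define S where "S = (\<Sum>i<n. \<bar>u i\<bar>)"
  define t0 where "t0 = (\<lambda>i\<in>{..<n}. sgn (u i) / 2)"
  have t0: "t0 \<in> cube_n n" "(\<lambda>i\<in>{..<n}. - t0 i) \<in> cube_n n"
    by (auto simp: t0_def cube_n_def sgn_if)
  have inner_t0: "inner_n n u t0 = S / 2" "inner_n n u (\<lambda>i\<in>{..<n}. - t0 i) = - S / 2"
    by (auto simp: S_def inner_n_def t0_def sum_divide_distrib sum_negf[symmetric]
        intro!: sum.cong simp: sgn_if)
  have bound: "\<bar>inner_n n u t\<bar> \<le> S / 2" if "t \<in> cube_n n" for t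
  proof -
    have "\<bar>inner_n n u t\<bar> \<le> (\<Sum>i<n. \<bar>u i\<bar> * \<bar>t i\<bar>)"
      unfolding inner_n_def abs_mult[symmetric] by (rule sum_abs)
    also have "\<dots> \<le> (\<Sum>i<n. \<bar>u i\<bar> * (1/2))"
      using that by (intro sum_mono mult_left_mono) (force simp: cube_n_def PiE_iff abs_le_iff)+
    finally show ?thesis by (simp add: S_def sum_divide_distrib)
  qed
  have "(SUP t\<in>cube_n n. inner_n n u t) = S / 2"
    using t0(1) inner_t0(1) bound by (intro cSup_eq_maximum) (force simp: abs_le_iff)+
  moreover have "(INF t\<in>cube_n n. inner_n n u t) = - S / 2"
    using t0(2) inner_t0(2) bound by (intro cInf_eq_minimum) (force simp: abs_le_iff)+
  ultimately show ?thesis by (simp add: width_cube_def S_def)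
qed

lemma space_Rn: "space (Rn n) = {..<n} \<rightarrow>\<^sub>E UNIV"
  by (simp add: Rn_def space_PiM)

lemma sigma_finite_Rn: "sigma_finite_measure (Rn n)"
proof -
  interpret product_sigma_finite "\<lambda>_::nat. lborel" by standard
  show ?thesis unfolding Rn_def by (rule sigma_finite) simp
qed

lemma euclid_norm_measurable[measurable]: "euclid_norm n \<in> borel_measurable (Rn n)"
  unfolding euclid_norm_def Rn_def by measurable

lemma sum_abs_measurable_Rn[measurable]: "(\<lambda>x. \<Sum>i<n. \<bar>x i\<bar>) \<in> borel_measurable (Rn n)"
  unfolding Rn_def by measurable

lemma unit_ball_n_sets[measurable]: "unit_ball_n n \<in> sets (Rn n)"
  unfolding unit_ball_n_def by measurable

lemma euclid_norm_nonneg: "0 \<le> euclid_norm n x"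
  unfolding euclid_norm_def by (simp add: sum_nonneg)

lemma euclid_norm_power2: "(euclid_norm n x)\<^sup>2 = (\<Sum>i<n. (x i)\<^sup>2)"
  unfolding euclid_norm_def by (simp add: sum_nonneg)

lemma emeasure_unit_ball_n: "emeasure (Rn n) (unit_ball_n n) = ennreal (unit_ball_vol (real n))"
proof -
  have "unit_ball_n n = {f. sqrt (\<Sum>i\<in>{..<n}. (f i)\<^sup>2) \<le> 1} \<inter> space (Pi\<^sub>M {..<n} (\<lambda>_. lborel))"
    by (auto simp: unit_ball_n_def euclid_norm_def Rn_def)
  then show ?thesis using emeasure_cball_aux[of "{..<n}" 1] by (simp add: Rn_def)
qed

definition scale_Rn :: "nat \<Rightarrow> real \<Rightarrow> (nat \<Rightarrow> real) \<Rightarrow> (nat \<Rightarrow> real)" where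
  "scale_Rn n c x = (\<lambda>i\<in>{..<n}. c * x i)"

lemma scale_Rn_measurable[measurable]: "scale_Rn n c \<in> measurable (Rn n) (Rn n)"
  unfolding scale_Rn_def Rn_def by measurable

lemma scale_Rn_in_space: "x \<in> space (Rn n) \<Longrightarrow> scale_Rn n c x \<in> space (Rn n)"
  by (simp add: scale_Rn_def space_Rn)

lemma euclid_norm_scale_Rn: "0 < c \<Longrightarrow> euclid_norm n (scale_Rn n c x) = c * euclid_norm n x"
  by (simp add: euclid_norm_def scale_Rn_def power_mult_distrib sum_distrib_left[symmetric]
      real_sqrt_mult)

lemma sigma_finite_density_const: "sigma_finite_measure (density (lborel::real measure) (\<lambda>_. ennreal c))"
  by (subst sigma_finite_measure.sigma_finite_iff_density_finite'[OF sigma_finite_lborel]) auto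

lemma PiM_density_const_eq_density_Rn:
  assumes "0 \<le> c"
  shows "PiM {..<n} (\<lambda>_. density lborel (\<lambda>_. ennreal c)) = density (Rn n) (\<lambda>_. ennreal (c ^ n))"
proof -
  interpret L: product_sigma_finite "\<lambda>_::nat. lborel" by standard
  interpret D: product_sigma_finite "\<lambda>_::nat. density (lborel::real measure) (\<lambda>_. ennreal c)"
    by (rule product_sigma_finite.intro) (rule sigma_finite_density_const)
  show ?thesis
  proof (rule D.PiM_eqI[symmetric])
    fix A :: "nat \<Rightarrow> real set" assume "\<And>i. i \<in> {..<n} \<Longrightarrow> A i \<in> sets (density lborel (\<lambda>_. ennreal c))"
    then have A: "\<And>i. i \<in> {..<n} \<Longrightarrow> A i \<in> sets borel" by simp
    have "emeasure (density (Rn n) (\<lambda>_. ennreal (c ^ n))) (PiE {..<n} A)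
        = ennreal (c ^ n) * (\<Prod>i<n. emeasure lborel (A i))"
      using A unfolding Rn_def
      by (subst emeasure_density_const, simp add: sets_PiM_I_finite) (subst L.emeasure_PiM, auto)
    also have "\<dots> = (\<Prod>i<n. emeasure (density lborel (\<lambda>_. ennreal c)) (A i))"
      using A assms by (simp add: prod.distrib ennreal_power emeasure_density_const)
    finally show "emeasure (density (Rn n) (\<lambda>_. ennreal (c ^ n))) (PiE {..<n} A)
        = (\<Prod>i<n. emeasure (density lborel (\<lambda>_. ennreal c)) (A i))" .
  qed (simp_all add: Rn_def cong: sets_PiM_cong)
qed

lemma distr_scale_Rn:
  assumes c: "0 < c"
  shows "distr (Rn n) (Rn n) (scale_Rn n c) = density (Rn n) (\<lambda>_. ennreal ((1/c) ^ n))"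
proof -
  interpret L: product_sigma_finite "\<lambda>_::nat. lborel" by standard
  interpret D: product_sigma_finite "\<lambda>_::nat. density (lborel::real measure) (\<lambda>_. ennreal (1/c))"
    by (rule product_sigma_finite.intro) (rule sigma_finite_density_const)
  have emeasure_vimage_mult: "emeasure lborel ((*) c -` B) = emeasure (density lborel (\<lambda>_. ennreal (1/c))) B"
    if "B \<in> sets borel" for B
  proof -
    have "emeasure lborel ((*) c -` B) = emeasure (distr lborel borel ((*) c)) B"
      using that by (subst emeasure_distr) auto
    then show ?thesis
      using c by (simp add: lborel_distr_mult inverse_eq_divide)
  qed
  have "distr (Rn n) (Rn n) (scale_Rn n c) = PiM {..<n} (\<lambda>_. density lborel (\<lambda>_. ennreal (1/c)))"
  proof (rule D.PiM_eqI)
    fix A :: "nat \<Rightarrow> real set" assume "\<And>i. i \<in> {..<n} \<Longrightarrow> A i \<in> sets (density lborel (\<lambda>_. ennreal (1/c)))"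
    then have A: "\<And>i. i \<in> {..<n} \<Longrightarrow> A i \<in> sets borel" by simp
    have box: "scale_Rn n c -` PiE {..<n} A \<inter> space (Rn n) = PiE {..<n} (\<lambda>i. (*) c -` A i)"
      by (auto simp: scale_Rn_def space_Rn PiE_iff extensional_def)
    have "PiE {..<n} A \<in> sets (Rn n)"
      using A unfolding Rn_def by (intro sets_PiM_I_finite) auto
    then have "emeasure (distr (Rn n) (Rn n) (scale_Rn n c)) (PiE {..<n} A)
        = emeasure (Rn n) (PiE {..<n} (\<lambda>i. (*) c -` A i))"
      by (simp add: emeasure_distr box)
    also have "\<dots> = (\<Prod>i<n. emeasure lborel ((*) c -` A i))"
      using A unfolding Rn_def by (subst L.emeasure_PiM) (auto simp: vimage_def)
    finally show "emeasure (distr (Rn n) (Rn n) (scale_Rn n c)) (PiE {..<n} A)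
        = (\<Prod>i<n. emeasure (density lborel (\<lambda>_. ennreal (1/c))) (A i))"
      using A by (simp add: emeasure_vimage_mult)
  qed (simp_all add: Rn_def cong: sets_PiM_cong)
  then show ?thesis
    using c by (simp add: PiM_density_const_eq_density_Rn)
qed

lemma emeasure_scale_Rn_vimage:
  assumes "0 < c" and "E \<in> sets (Rn n)"
  shows "emeasure (Rn n) (scale_Rn n c -` E \<inter> space (Rn n)) = ennreal ((1/c) ^ n) * emeasure (Rn n) E"
proof -
  have "emeasure (Rn n) (scale_Rn n c -` E \<inter> space (Rn n)) = emeasure (distr (Rn n) (Rn n) (scale_Rn n c)) E"
    using assms(2) by (simp add: emeasure_distr)
  then show ?thesis
    using assms by (simp add: distr_scale_Rn emeasure_density_const)
qed

subsection \<open>Gaussian measure of cones\<close>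

lemma PiM_density_eq_density_prod:
  fixes f :: "real \<Rightarrow> real"
  assumes f[measurable]: "f \<in> borel_measurable borel" and f_nonneg: "\<And>x. 0 \<le> f x"
    and prob: "prob_space (density lborel f)"
  shows "PiM {..<n} (\<lambda>_. density lborel f) = density (Rn n) (\<lambda>x. \<Prod>i<n. f (x i))"
proof -
  interpret L: product_sigma_finite "\<lambda>_::nat. lborel" by standard
  interpret P: product_prob_space "\<lambda>_::nat. density lborel f"
    using prob by (intro product_prob_spaceI)
  show ?thesis
  proof (rule P.PiM_eqI[symmetric])
    fix A :: "nat \<Rightarrow> real set" assume "\<And>i. i \<in> {..<n} \<Longrightarrow> A i \<in> sets (density lborel f)"
    then have A: "\<And>i. i \<in> {..<n} \<Longrightarrow> A i \<in> sets borel" by simp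
    have ind: "ennreal (\<Prod>i<n. f (x i)) * indicator (PiE {..<n} A) x
        = (\<Prod>i<n. ennreal (f (x i)) * indicator (A i) (x i))" if "x \<in> space (Rn n)" for x
    proof -
      have "indicator (PiE {..<n} A) x = (\<Prod>i<n. indicator (A i) (x i) :: ennreal)"
        using that by (auto simp: space_Rn indicator_def PiE_iff)
      then show ?thesis using f_nonneg by (simp add: prod.distrib prod_ennreal)
    qed
    have "emeasure (density (Rn n) (\<lambda>x. \<Prod>i<n. f (x i))) (PiE {..<n} A)
        = (\<integral>\<^sup>+x. (\<Prod>i<n. ennreal (f (x i)) * indicator (A i) (x i)) \<partial>Rn n)"
      using A ind by (subst emeasure_density)
        (auto simp: Rn_def intro!: sets_PiM_I_finite nn_integral_cong)
    also have "\<dots> = (\<Prod>i<n. \<integral>\<^sup>+t. ennreal (f t) * indicator (A i) t \<partial>lborel)"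
      unfolding Rn_def using A by (subst L.product_nn_integral_prod) auto
    finally show "emeasure (density (Rn n) (\<lambda>x. \<Prod>i<n. f (x i))) (PiE {..<n} A)
        = (\<Prod>i<n. emeasure (density lborel f) (A i))"
      using A by (simp add: emeasure_density)
  qed (simp_all add: Rn_def cong: sets_PiM_cong)
qed

definition gauss_peak :: "nat \<Rightarrow> real" where
  "gauss_peak n = (1 / sqrt (2 * pi)) ^ n"

lemma gauss_peak_pos: "0 < gauss_peak n"
  by (simp add: gauss_peak_def)

lemma PiM_std_normal_eq_density:
  "PiM {..<n} (\<lambda>_. std_normal_distribution)
     = density (Rn n) (\<lambda>x. gauss_peak n * exp (- (euclid_norm n x)\<^sup>2 / 2))"
proof -
  have "(\<Prod>i<n. std_normal_density (x i)) = gauss_peak n * exp (- (euclid_norm n x)\<^sup>2 / 2)"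
    for x
  proof -
    have "(\<Prod>i<n. std_normal_density (x i)) = (\<Prod>i<n. 1 / sqrt (2 * pi) * exp (- (x i)\<^sup>2 / 2))"
      by (simp add: std_normal_density_def)
    also have "\<dots> = gauss_peak n * (\<Prod>i<n. exp (- (x i)\<^sup>2 / 2))"
      by (simp only: prod.distrib prod_constant card_lessThan gauss_peak_def)
    also have "(\<Prod>i<n. exp (- (x i)\<^sup>2 / 2)) = exp (- (euclid_norm n x)\<^sup>2 / 2)"
      by (simp add: exp_sum[symmetric] euclid_norm_power2 sum_negf sum_divide_distrib)
    finally show ?thesis .
  qed
  then show ?thesis
    by (simp add: PiM_density_eq_density_prod prob_space_normal_density)
qed

definition radial_cone :: "nat \<Rightarrow> (nat \<Rightarrow> real) set \<Rightarrow> bool" where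
  "radial_cone n K \<longleftrightarrow> (\<forall>c>0. \<forall>x\<in>space (Rn n). scale_Rn n c x \<in> K \<longleftrightarrow> x \<in> K)"

lemma emeasure_radial_cone_norm_le:
  assumes K: "K \<in> sets (Rn n)" and cone: "radial_cone n K" and r: "0 < r"
  shows "emeasure (Rn n) {x\<in>space (Rn n). x \<in> K \<and> euclid_norm n x \<le> r}
       = ennreal (r ^ n) * emeasure (Rn n) (K \<inter> unit_ball_n n)"
proof -
  have "{x\<in>space (Rn n). x \<in> K \<and> euclid_norm n x \<le> r}
      = scale_Rn n (1/r) -` (K \<inter> unit_ball_n n) \<inter> space (Rn n)"
    using cone r
    by (auto simp: radial_cone_def unit_ball_n_def scale_Rn_in_space euclid_norm_scale_Rn field_simps)
  then show ?thesis
    using r K by (simp add: emeasure_scale_Rn_vimage del: vimage_Int)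
qed

lemma emeasure_euclid_norm_le_0:
  assumes "1 \<le> n"
  shows "emeasure (Rn n) {x\<in>space (Rn n). euclid_norm n x \<le> 0} = 0"
proof -
  interpret product_sigma_finite "\<lambda>_::nat. lborel" by standard
  have "{x\<in>space (Rn n). euclid_norm n x \<le> 0} \<subseteq> PiE {..<n} (\<lambda>_. {0})"
  proof
    fix x assume x: "x \<in> {x\<in>space (Rn n). euclid_norm n x \<le> 0}"
    then have "(\<Sum>i<n. (x i)\<^sup>2) = 0"
      using euclid_norm_nonneg[of n x] euclid_norm_power2[of n x] by simp
    then show "x \<in> PiE {..<n} (\<lambda>_. {0})"
      using x by (auto simp: space_Rn PiE_iff sum_nonneg_eq_0_iff extensional_def fun_eq_iff)
  qed
  moreover have "emeasure (Rn n) (PiE {..<n} (\<lambda>_. {0})) = 0"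
    using assms unfolding Rn_def by (subst emeasure_PiM) auto
  moreover have "PiE {..<n} (\<lambda>_. {0::real}) \<in> sets (Rn n)"
    unfolding Rn_def by (intro sets_PiM_I_finite) auto
  ultimately show ?thesis by (metis (no_types, lifting) emeasure_eq_0)
qed

lemma emeasure_density_layer_cake:
  fixes h :: "'a \<Rightarrow> real"
  assumes M: "sigma_finite_measure M" and h[measurable]: "h \<in> borel_measurable M"
    and h_nonneg: "\<And>x. 0 \<le> h x" and K[measurable]: "K \<in> sets M"
  shows "emeasure (density M h) K
       = (\<integral>\<^sup>+t. indicator {0<..} t * emeasure M {x\<in>space M. x \<in> K \<and> t \<le> h x} \<partial>lborel)"
proof -
  interpret pair_sigma_finite M "lborel :: real measure"
    using M by (simp add: pair_sigma_finite_def sigma_finite_lborel)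
  define f where "f = (\<lambda>(x, t::real). indicator {(x, t). x \<in> K \<and> 0 < t \<and> t \<le> h x} (x, t) :: ennreal)"
  have f_measurable: "f \<in> borel_measurable (M \<Otimes>\<^sub>M lborel)"
    unfolding f_def by measurable
  have "emeasure (density M h) K = (\<integral>\<^sup>+x. ennreal (h x) * indicator K x \<partial>M)"
    by (simp add: emeasure_density)
  also have "\<dots> = (\<integral>\<^sup>+x. (\<integral>\<^sup>+t. f (x, t) \<partial>lborel) \<partial>M)"
  proof (intro nn_integral_cong)
    fix x
    have "(\<integral>\<^sup>+t. f (x, t) \<partial>lborel) = (\<integral>\<^sup>+t. indicator K x * indicator {0<..h x} t \<partial>lborel)"
      by (intro nn_integral_cong) (auto simp: f_def indicator_def)
    then show "ennreal (h x) * indicator K x = (\<integral>\<^sup>+t. f (x, t) \<partial>lborel)"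
      using h_nonneg[of x] by (simp add: nn_integral_cmult mult.commute)
  qed
  also have "\<dots> = (\<integral>\<^sup>+t. (\<integral>\<^sup>+x. f (x, t) \<partial>M) \<partial>lborel)"
    by (rule Fubini[OF f_measurable, symmetric])
  also have "\<dots> = (\<integral>\<^sup>+t. indicator {0<..} t * emeasure M {x\<in>space M. x \<in> K \<and> t \<le> h x} \<partial>lborel)"
  proof (intro nn_integral_cong)
    fix t :: real
    have "(\<integral>\<^sup>+x. f (x, t) \<partial>M) = (\<integral>\<^sup>+x. indicator {0<..} t * indicator {x\<in>space M. x \<in> K \<and> t \<le> h x} x \<partial>M)"
      by (intro nn_integral_cong) (auto simp: f_def indicator_def)
    then show "(\<integral>\<^sup>+x. f (x, t) \<partial>M) = indicator {0<..} t * emeasure M {x\<in>space M. x \<in> K \<and> t \<le> h x}"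
      by (simp add: nn_integral_cmult)
  qed
  finally show ?thesis .
qed

text \<open>\<open>level_radius_pow n t\<close> is the \<open>n\<close>-th power of the radius of the ball on which the
  standard Gaussian density of \<open>\<real>\<^sup>n\<close> is at least \<open>t\<close>.\<close>

definition level_radius_pow :: "nat \<Rightarrow> real \<Rightarrow> real" where
  "level_radius_pow n t = (if t \<le> gauss_peak n then sqrt (2 * ln (gauss_peak n / t)) ^ n else 0)"

lemma level_radius_pow_measurable[measurable]: "level_radius_pow n \<in> borel_measurable borel"
  unfolding level_radius_pow_def by measurable

lemma gauss_level_iff_euclid_norm_le:
  assumes t: "0 < t" "t \<le> gauss_peak n"
  shows "t \<le> gauss_peak n * exp (- (euclid_norm n x)\<^sup>2 / 2)
     \<longleftrightarrow> euclid_norm n x \<le> sqrt (2 * ln (gauss_peak n / t))"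
proof -
  define \<rho> where "\<rho> = sqrt (2 * ln (gauss_peak n / t))"
  have ln_nonneg: "0 \<le> ln (gauss_peak n / t)" using t by simp
  then have \<rho>: "0 \<le> \<rho>" by (simp add: \<rho>_def)
  have "t \<le> gauss_peak n * exp (- (euclid_norm n x)\<^sup>2 / 2)
      \<longleftrightarrow> ln t \<le> ln (gauss_peak n) - (euclid_norm n x)\<^sup>2 / 2"
    using t gauss_peak_pos[of n] by (simp add: ln_mult flip: ln_le_cancel_iff)
  also have "\<dots> \<longleftrightarrow> (euclid_norm n x)\<^sup>2 \<le> \<rho>\<^sup>2"
    using ln_nonneg t gauss_peak_pos[of n] by (simp add: \<rho>_def ln_div) linarith
  also have "\<dots> \<longleftrightarrow> euclid_norm n x \<le> \<rho>"
    using \<rho> euclid_norm_nonneg[of n x] by (simp add: power2_le_iff_abs_le)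
  finally show ?thesis by (simp add: \<rho>_def)
qed

lemma emeasure_radial_cone_gauss_level:
  assumes n: "1 \<le> n" and t: "0 < t" and K: "K \<in> sets (Rn n)" and cone: "radial_cone n K"
  shows "emeasure (Rn n) {x\<in>space (Rn n). x \<in> K \<and> t \<le> gauss_peak n * exp (- (euclid_norm n x)\<^sup>2 / 2)}
       = ennreal (level_radius_pow n t) * emeasure (Rn n) (K \<inter> unit_ball_n n)"
proof (cases "t \<le> gauss_peak n")
  case False
  have "gauss_peak n * exp (- (euclid_norm n x)\<^sup>2 / 2) \<le> gauss_peak n" for x
    using gauss_peak_pos[of n] by (intro mult_left_le) auto
  then have "\<not> t \<le> gauss_peak n * exp (- (euclid_norm n x)\<^sup>2 / 2)" for x
    using False by (meson order_trans)
  then show ?thesis using False by (simp add: level_radius_pow_def)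
next
  case True
  define \<rho> where "\<rho> = sqrt (2 * ln (gauss_peak n / t))"
  have level_set: "{x\<in>space (Rn n). x \<in> K \<and> t \<le> gauss_peak n * exp (- (euclid_norm n x)\<^sup>2 / 2)}
      = {x\<in>space (Rn n). x \<in> K \<and> euclid_norm n x \<le> \<rho>}"
    using gauss_level_iff_euclid_norm_le[OF t True] by (simp add: \<rho>_def)
  have \<rho>: "0 \<le> \<rho>" using True t by (simp add: \<rho>_def)
  show ?thesis
  proof (cases "0 < \<rho>")
    case True
    then show ?thesis
      using emeasure_radial_cone_norm_le[OF K cone True] \<open>t \<le> gauss_peak n\<close>
      unfolding level_set by (simp add: level_radius_pow_def \<rho>_def)
  next
    case False
    then have "\<rho> = 0" using \<rho> by simp
    then have "emeasure (Rn n) {x\<in>space (Rn n). x \<in> K \<and> euclid_norm n x \<le> \<rho>} = 0"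
      by (intro emeasure_eq_0[OF _ emeasure_euclid_norm_le_0[OF n]]) auto
    moreover have "level_radius_pow n t = 0"
      using \<open>\<rho> = 0\<close> n \<open>t \<le> gauss_peak n\<close> by (simp add: level_radius_pow_def \<rho>_def[symmetric])
    ultimately show ?thesis unfolding level_set by simp
  qed
qed

definition gauss_cone_factor :: "nat \<Rightarrow> ennreal" where
  "gauss_cone_factor n = (\<integral>\<^sup>+t. indicator {0<..} t * ennreal (level_radius_pow n t) \<partial>lborel)"

text \<open>In the layer cake formula, each layer of a cone is a dilate of its truncation by the
  unit ball.\<close>

lemma emeasure_std_normal_radial_cone:
  assumes n: "1 \<le> n" and K[measurable]: "K \<in> sets (Rn n)" and cone: "radial_cone n K"
  shows "emeasure (PiM {..<n} (\<lambda>_. std_normal_distribution)) K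
       = emeasure (Rn n) (K \<inter> unit_ball_n n) * gauss_cone_factor n"
proof -
  have "emeasure (PiM {..<n} (\<lambda>_. std_normal_distribution)) K
      = (\<integral>\<^sup>+t. indicator {0<..} t * emeasure (Rn n)
           {x\<in>space (Rn n). x \<in> K \<and> t \<le> gauss_peak n * exp (- (euclid_norm n x)\<^sup>2 / 2)} \<partial>lborel)"
    unfolding PiM_std_normal_eq_density
    by (rule emeasure_density_layer_cake[OF sigma_finite_Rn]) (auto simp: gauss_peak_pos less_imp_le)
  also have "\<dots> = (\<integral>\<^sup>+t. emeasure (Rn n) (K \<inter> unit_ball_n n) *
                         (indicator {0<..} t * ennreal (level_radius_pow n t)) \<partial>lborel)"
    using emeasure_radial_cone_gauss_level[OF n _ K cone]
    by (intro nn_integral_cong) (auto simp: indicator_def mult.commute)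
  finally show ?thesis
    unfolding gauss_cone_factor_def by (subst (asm) nn_integral_cmult) auto
qed

definition sphere_proj :: "nat \<Rightarrow> (nat \<Rightarrow> real) \<Rightarrow> (nat \<Rightarrow> real)" where
  "sphere_proj n x = (\<lambda>i\<in>{..<n}. x i / euclid_norm n x)"

lemma sphere_proj_measurable[measurable]: "sphere_proj n \<in> measurable (Rn n) (Rn n)"
  unfolding sphere_proj_def Rn_def euclid_norm_def by measurable

lemma radial_cone_vimage_sphere_proj: "radial_cone n (sphere_proj n -` A \<inter> space (Rn n))"
proof -
  have "sphere_proj n (scale_Rn n c x) = sphere_proj n x" if "0 < c" for c x
    using that euclid_norm_scale_Rn[of c n x] unfolding sphere_proj_def scale_Rn_def
    by (auto simp: fun_eq_iff)
  then show ?thesis by (auto simp: radial_cone_def scale_Rn_in_space)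
qed

lemma sets_PiM_std_normal: "sets (PiM {..<n} (\<lambda>_. std_normal_distribution)) = sets (Rn n)"
  unfolding Rn_def by (simp cong: sets_PiM_cong)

lemma space_PiM_std_normal: "space (PiM {..<n} (\<lambda>_. std_normal_distribution)) = space (Rn n)"
  using sets_PiM_std_normal by (rule sets_eq_imp_space_eq)

lemma gauss_cone_factor_eq:
  assumes n: "1 \<le> n"
  shows "gauss_cone_factor n = ennreal (1 / unit_ball_vol (real n))"
proof -
  define \<beta> where "\<beta> = unit_ball_vol (real n)"
  have \<beta>: "0 < \<beta>" by (simp add: \<beta>_def)
  interpret G: prob_space "PiM {..<n} (\<lambda>_. std_normal_distribution)"
    by (intro prob_space_PiM) (auto intro: prob_space_normal_density)
  have "radial_cone n (space (Rn n))"
    by (auto simp: radial_cone_def scale_Rn_in_space)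
  then have "1 = emeasure (Rn n) (space (Rn n) \<inter> unit_ball_n n) * gauss_cone_factor n"
    using G.emeasure_space_1 emeasure_std_normal_radial_cone[OF n] by (simp add: space_PiM_std_normal)
  also have "space (Rn n) \<inter> unit_ball_n n = unit_ball_n n"
    by (auto simp: unit_ball_n_def)
  finally have total: "ennreal \<beta> * gauss_cone_factor n = 1"
    by (simp add: emeasure_unit_ball_n \<beta>_def)
  have "gauss_cone_factor n = (ennreal (1 / \<beta>) * ennreal \<beta>) * gauss_cone_factor n"
    using \<beta> by (simp add: ennreal_mult''[symmetric])
  then show ?thesis
    using total by (simp add: mult.assoc \<beta>_def)
qed

theorem uniform_sphere_eq_distr_std_normal:
  assumes n: "1 \<le> n"
  shows "uniform_sphere n = distr (PiM {..<n} (\<lambda>_. std_normal_distribution)) (Rn n) (sphere_proj n)"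
proof (rule measure_eqI)
  let ?G = "PiM {..<n} (\<lambda>_. std_normal_distribution)"
  fix A assume "A \<in> sets (uniform_sphere n)"
  then have A[measurable]: "A \<in> sets (Rn n)" by (simp add: uniform_sphere_def)
  define K where "K = sphere_proj n -` A \<inter> space (Rn n)"
  have K: "K \<in> sets (Rn n)" unfolding K_def by measurable
  have "sphere_proj n \<in> measurable ?G (Rn n)"
    by (simp add: measurable_cong_sets[OF sets_PiM_std_normal])
  then have "emeasure (distr ?G (Rn n) (sphere_proj n)) A = emeasure ?G K"
    by (simp add: emeasure_distr space_PiM_std_normal K_def)
  also have "\<dots> = emeasure (Rn n) (K \<inter> unit_ball_n n) * ennreal (1 / unit_ball_vol (real n))"
    using emeasure_std_normal_radial_cone[OF n K] radial_cone_vimage_sphere_proj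
    by (simp add: K_def gauss_cone_factor_eq[OF n])
  also have "\<dots> = emeasure (Rn n) (unit_ball_n n \<inter> K) / emeasure (Rn n) (unit_ball_n n)"
    by (simp add: emeasure_unit_ball_n divide_ennreal_def inverse_ennreal Int_commute inverse_eq_divide)
  also have "\<dots> = emeasure (uniform_sphere n) A"
    by (simp add: uniform_sphere_def emeasure_distr sphere_proj_def[symmetric] K_def)
  finally show "emeasure (uniform_sphere n) A = emeasure (distr ?G (Rn n) (sphere_proj n)) A" ..
qed (simp add: uniform_sphere_def)

subsection \<open>Convergence in distribution to a centred normal law\<close>

lemma isCont_shift_bounds:
  fixes \<Phi> :: "real \<Rightarrow> real"
  assumes "isCont \<Phi> y" and "0 < d"
  shows "\<exists>e>0. \<Phi> (y + e) < \<Phi> y + d \<and> \<Phi> y - d < \<Phi> (y - e)"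
proof -
  obtain s where s: "0 < s" "\<And>z. z \<noteq> y \<Longrightarrow> \<bar>z - y\<bar> < s \<Longrightarrow> \<bar>\<Phi> z - \<Phi> y\<bar> < d"
    using LIM_D[OF assms(1)[unfolded isCont_def] assms(2)] by auto
  then have "\<bar>\<Phi> (y + s / 2) - \<Phi> y\<bar> < d" "\<bar>\<Phi> (y - s / 2) - \<Phi> y\<bar> < d"
    by auto
  then show ?thesis
    using s(1) by (intro exI[of _ "s / 2"]) (auto simp: abs_less_iff)
qed

lemma tendsto_of_shifted_bounds:
  fixes F :: "nat \<Rightarrow> real" and G :: "nat \<Rightarrow> real \<Rightarrow> real" and p :: "real \<Rightarrow> nat \<Rightarrow> real"
  assumes cont: "isCont \<Phi> y"
    and G: "\<And>z. (\<lambda>n. G n z) \<longlonglongrightarrow> \<Phi> z"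
    and p: "\<And>e. 0 < e \<Longrightarrow> p e \<longlonglongrightarrow> 0"
    and upper: "\<And>n e. 0 < e \<Longrightarrow> F n \<le> G n (y + e) + p e n"
    and lower: "\<And>n e. 0 < e \<Longrightarrow> G n (y - e) \<le> F n + p e n"
  shows "F \<longlonglongrightarrow> \<Phi> y"
proof (rule order_tendstoI)
  fix a assume "\<Phi> y < a"
  define d where "d = (a - \<Phi> y) / 3"
  have d: "0 < d" "a = \<Phi> y + 3 * d" using \<open>\<Phi> y < a\<close> unfolding d_def by (auto simp: field_simps)
  then obtain e where e: "0 < e" "\<Phi> (y + e) < \<Phi> y + d"
    using isCont_shift_bounds[OF cont] by blast
  have "eventually (\<lambda>n. G n (y + e) < \<Phi> (y + e) + d) sequentially"
    using d by (intro order_tendstoD(2)[OF G]) simp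
  moreover have "eventually (\<lambda>n. p e n < d) sequentially"
    using d by (intro order_tendstoD(2)[OF p[OF e(1)]])
  ultimately show "eventually (\<lambda>n. F n < a) sequentially"
  proof eventually_elim
    case (elim n)
    then show ?case using upper[OF e(1), of n] e(2) d(2) by linarith
  qed
next
  fix a assume "a < \<Phi> y"
  define d where "d = (\<Phi> y - a) / 3"
  have d: "0 < d" "a = \<Phi> y - 3 * d" using \<open>a < \<Phi> y\<close> unfolding d_def by (auto simp: field_simps)
  then obtain e where e: "0 < e" "\<Phi> y - d < \<Phi> (y - e)"
    using isCont_shift_bounds[OF cont] by blast
  have "eventually (\<lambda>n. \<Phi> (y - e) - d < G n (y - e)) sequentially"
    using d by (intro order_tendstoD(1)[OF G]) simp
  moreover have "eventually (\<lambda>n. p e n < d) sequentially"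
    using d by (intro order_tendstoD(2)[OF p[OF e(1)]])
  ultimately show "eventually (\<lambda>n. a < F n) sequentially"
  proof eventually_elim
    case (elim n)
    then show ?case using lower[OF e(1), of n] e(2) d(2) by linarith
  qed
qed

lemma isCont_cdf_std_normal: "isCont (cdf std_normal_distribution) x"
proof -
  interpret real_distribution std_normal_distribution by (rule real_dist_normal_dist)
  have "emeasure std_normal_distribution {x} = (\<integral>\<^sup>+t. ennreal (std_normal_density x) * indicator {x} t \<partial>lborel)"
    by (subst emeasure_density) (auto intro!: nn_integral_cong simp: indicator_def)
  then have "measure std_normal_distribution {x} = 0"
    by (simp add: measure_def nn_integral_cmult_indicator)
  then show ?thesis by (simp add: isCont_cdf)
qed

lemma cdf_normal_density:
  assumes \<sigma>: "0 < \<sigma>"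
  shows "cdf (density lborel (\<lambda>x. ennreal (normal_density 0 \<sigma> x))) y = cdf std_normal_distribution (y / \<sigma>)"
proof -
  interpret S: prob_space std_normal_distribution by (rule prob_space_normal_density) simp
  have "distributed std_normal_distribution lborel (\<lambda>x. x) (\<lambda>x. ennreal (normal_density 0 1 x))"
    unfolding distributed_def by (auto simp: distr_id2)
  then have "distributed std_normal_distribution lborel (\<lambda>x. 0 + \<sigma> * x)
      (\<lambda>x. ennreal (normal_density (0 + \<sigma> * 0) (\<bar>\<sigma>\<bar> * 1) x))"
    using \<sigma> by (intro S.normal_density_affine) auto
  then have eq: "density lborel (\<lambda>x. ennreal (normal_density 0 \<sigma> x)) = distr std_normal_distribution lborel ((*) \<sigma>)"
    using \<sigma> by (simp add: distributed_def)
  have "(*) \<sigma> -` {..y} \<inter> space std_normal_distribution = {..y / \<sigma>}"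
    using \<sigma> by (auto simp: pos_le_divide_eq mult.commute)
  then show ?thesis
    unfolding eq cdf_def by (subst measure_distr) auto
qed

lemma (in prob_space) slutsky_normal:
  fixes Y Z :: "nat \<Rightarrow> 'a \<Rightarrow> real"
  assumes \<sigma>: "0 < \<sigma>"
    and [measurable]: "\<And>n. Y n \<in> borel_measurable M" "\<And>n. Z n \<in> borel_measurable M"
    and clt: "weak_conv_m (\<lambda>n. distr M borel (\<lambda>x. Z n x / \<sigma>)) std_normal_distribution"
    and small: "\<And>e. 0 < e \<Longrightarrow> (\<lambda>n. prob {x\<in>space M. e \<le> \<bar>Y n x - Z n x\<bar>}) \<longlonglongrightarrow> 0"
  shows "weak_conv_m (\<lambda>n. distr M borel (Y n)) (density lborel (\<lambda>x. ennreal (normal_density 0 \<sigma> x)))"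
  unfolding weak_conv_m_def weak_conv_def
proof (intro allI impI)
  fix y :: real
  let ?\<Phi> = "\<lambda>z. cdf std_normal_distribution (z / \<sigma>)"
  have cdf_distr: "cdf (distr M borel X) z = prob {x\<in>space M. X x \<le> z}"
    if "X \<in> borel_measurable M" for X :: "'a \<Rightarrow> real" and z
    using that unfolding cdf_def by (subst measure_distr) (auto simp: vimage_def Int_def conj_commute)
  have "(\<lambda>n. prob {x\<in>space M. Y n x \<le> y}) \<longlonglongrightarrow> ?\<Phi> y"
  proof (rule tendsto_of_shifted_bounds[where \<Phi> = ?\<Phi>
        and G = "\<lambda>n z. prob {x\<in>space M. Z n x \<le> z}"
        and p = "\<lambda>e n. prob {x\<in>space M. e \<le> \<bar>Y n x - Z n x\<bar>}"])
    show "isCont ?\<Phi> y"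
      using \<sigma> by (intro isCont_o2[OF _ isCont_cdf_std_normal] continuous_intros) auto
    show "(\<lambda>n. prob {x\<in>space M. Z n x \<le> z}) \<longlonglongrightarrow> ?\<Phi> z" for z
    proof -
      have "{x\<in>space M. Z n x \<le> z} = {x\<in>space M. Z n x / \<sigma> \<le> z / \<sigma>}" for n
        using \<sigma> by (auto simp: divide_le_cancel)
      then show ?thesis
        using clt isCont_cdf_std_normal cdf_distr[of "\<lambda>x. Z n x / \<sigma>" for n]
        unfolding weak_conv_m_def weak_conv_def by simp
    qed
    show "(\<lambda>n. prob {x\<in>space M. e \<le> \<bar>Y n x - Z n x\<bar>}) \<longlonglongrightarrow> 0" if "0 < e" for e
      using small[OF that] .
    show "prob {x\<in>space M. Y n x \<le> y}
        \<le> prob {x\<in>space M. Z n x \<le> y + e} + prob {x\<in>space M. e \<le> \<bar>Y n x - Z n x\<bar>}" for n e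
      by (rule order_trans[OF finite_measure_mono measure_subadditive]) auto
    show "prob {x\<in>space M. Z n x \<le> y - e}
        \<le> prob {x\<in>space M. Y n x \<le> y} + prob {x\<in>space M. e \<le> \<bar>Y n x - Z n x\<bar>}" for n e
      by (rule order_trans[OF finite_measure_mono measure_subadditive]) auto
  qed
  then show "(\<lambda>n. cdf (distr M borel (Y n)) y) \<longlonglongrightarrow> cdf (density lborel (\<lambda>x. ennreal (normal_density 0 \<sigma> x))) y"
    using cdf_distr cdf_normal_density[OF \<sigma>] by simp
qed

lemma weak_conv_m_eventually_cong:
  assumes "weak_conv_m \<mu> M" and "eventually (\<lambda>n. \<mu> n = \<nu> n) sequentially"
  shows "weak_conv_m \<nu> M"
  unfolding weak_conv_m_def weak_conv_def
proof (intro allI impI)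
  fix x assume "isCont (cdf M) x"
  then have "(\<lambda>n. cdf (\<mu> n) x) \<longlonglongrightarrow> cdf M x"
    using assms(1) unfolding weak_conv_m_def weak_conv_def by blast
  then show "(\<lambda>n. cdf (\<nu> n) x) \<longlonglongrightarrow> cdf M x"
    by (rule Lim_transform_eventually) (use assms(2) in \<open>auto elim: eventually_mono\<close>)
qed

subsection \<open>Second order expansion of the normalised width\<close>

lemma inverse_expansion_bounds:
  fixes s :: real
  assumes s0: "0 < s" and s2: "1/2 \<le> s\<^sup>2"
  shows "\<bar>1/s - 1\<bar> \<le> \<bar>s\<^sup>2 - 1\<bar>" and "\<bar>1/s - 1 + (s\<^sup>2 - 1)/2\<bar> \<le> (s\<^sup>2 - 1)\<^sup>2"
proof -
  have "7/10 \<le> s"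
  proof (rule ccontr)
    assume "\<not> 7/10 \<le> s"
    then have "s * s < (7/10) * (7/10)" using s0 by (intro mult_strict_mono) auto
    then show False using s2 by (simp add: power2_eq_square)
  qed
  then have k: "1 \<le> s * (s + 1)"
    using mult_mono[of "7/10" s "17/10" "s + 1"] by simp
  have diff_sq: "s\<^sup>2 - 1 = (s - 1) * (s + 1)" by (simp add: algebra_simps power2_eq_square)
  have "\<bar>1/s - 1\<bar> = \<bar>s - 1\<bar> / s"
    using s0 by (simp add: field_simps abs_minus_commute abs_div)
  also have "\<dots> \<le> \<bar>s - 1\<bar> * (s + 1)"
    using s0 mult_left_mono[OF k, of "\<bar>s - 1\<bar>"] by (simp add: divide_le_eq algebra_simps)
  also have "\<dots> = \<bar>s\<^sup>2 - 1\<bar>" using s0 by (simp add: diff_sq abs_mult)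
  finally show "\<bar>1/s - 1\<bar> \<le> \<bar>s\<^sup>2 - 1\<bar>" .
  have "s + 2 \<le> (s + 1)\<^sup>2 * (2 * s)"
    using mult_right_mono[OF k, of "2 * (s + 1)"] s0 by (simp add: power2_eq_square algebra_simps)
  then have k2: "(s + 2) / (2 * s) \<le> (s + 1)\<^sup>2"
    using s0 by (simp add: divide_le_eq)
  have "1/s - 1 + (s\<^sup>2 - 1)/2 = (s - 1)\<^sup>2 * ((s + 2) / (2 * s))"
    using s0 by (simp add: field_simps power2_eq_square)
  then have "\<bar>1/s - 1 + (s\<^sup>2 - 1)/2\<bar> = (s - 1)\<^sup>2 * ((s + 2) / (2 * s))"
    using s0 by simp
  also have "\<dots> \<le> (s - 1)\<^sup>2 * (s + 1)\<^sup>2" using k2 by (intro mult_left_mono) auto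
  also have "\<dots> = (s\<^sup>2 - 1)\<^sup>2" by (simp add: diff_sq power_mult_distrib)
  finally show "\<bar>1/s - 1 + (s\<^sup>2 - 1)/2\<bar> \<le> (s\<^sup>2 - 1)\<^sup>2" .
qed

text \<open>With \<open>r = sqrt n\<close>, \<open>A\<close> the centred sum of \<open>\<bar>g\<^sub>i\<bar>\<close> and \<open>C\<close> that of \<open>g\<^sub>i\<^sup>2\<close>, the first term is
  the normalised width and the subtracted terms its mean and its linearisation.\<close>

lemma sqrt_ratio_expansion_bound:
  fixes r A C m :: real
  assumes r: "0 < r" and C: "\<bar>C\<bar> \<le> r\<^sup>2 / 2" and m: "0 \<le> m" "m \<le> 1"
  shows "\<bar>(A + r\<^sup>2 * m) / sqrt (C + r\<^sup>2) - m * r - (A - (m/2) * C) / r\<bar> \<le> 2 * (A\<^sup>2 + C\<^sup>2) / r ^ 3"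
proof -
  define s where "s = sqrt (1 + C / r\<^sup>2)"
  have "\<bar>C / r\<^sup>2\<bar> \<le> 1/2" using C r by (simp add: abs_div divide_le_eq)
  then have q: "1/2 \<le> 1 + C / r\<^sup>2" by linarith
  then have s0: "0 < s" and ss: "s\<^sup>2 = 1 + C / r\<^sup>2"
    unfolding s_def by (intro real_sqrt_gt_zero real_sqrt_pow2, linarith)+
  have s2: "1/2 \<le> s\<^sup>2" using q ss by simp
  have C_eq: "C = r\<^sup>2 * (s\<^sup>2 - 1)" using r by (simp add: ss)
  have "C + r\<^sup>2 = r\<^sup>2 * (1 + C / r\<^sup>2)" using r by (simp add: field_simps)
  then have sqrt_eq: "sqrt (C + r\<^sup>2) = r * s"
    using r by (simp add: s_def real_sqrt_mult)
  have expansion: "(A + r\<^sup>2 * m) / sqrt (C + r\<^sup>2) - m * r - (A - (m/2) * C) / r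
       = (A / r) * (1/s - 1) + m * r * (1/s - 1 + (s\<^sup>2 - 1)/2)"
  proof -
    have "(A + r\<^sup>2 * m) / sqrt (C + r\<^sup>2) - m * r - (A - (m/2) * C) / r
        = (A + r\<^sup>2 * m) / (r * s) - m * r - (A - (m/2) * (r\<^sup>2 * (s\<^sup>2 - 1))) / r"
      by (simp only: sqrt_eq C_eq[symmetric])
    also have "\<dots> = (A / r) * (1/s - 1) + m * r * (1/s - 1 + (s\<^sup>2 - 1)/2)"
      using r s0 by (simp add: field_simps power2_eq_square)
    finally show ?thesis .
  qed
  have b1: "\<bar>(A / r) * (1/s - 1)\<bar> \<le> \<bar>A\<bar> / r * \<bar>s\<^sup>2 - 1\<bar>"
    using inverse_expansion_bounds(1)[OF s0 s2] r
    by (simp add: abs_mult) (intro divide_right_mono mult_left_mono, auto)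
  have b2: "\<bar>m * r * (1/s - 1 + (s\<^sup>2 - 1)/2)\<bar> \<le> m * r * (s\<^sup>2 - 1)\<^sup>2"
    using inverse_expansion_bounds(2)[OF s0 s2] r m by (simp add: abs_mult) (intro mult_left_mono, auto)
  have "\<bar>(A + r\<^sup>2 * m) / sqrt (C + r\<^sup>2) - m * r - (A - (m/2) * C) / r\<bar>
      \<le> \<bar>A\<bar> / r * \<bar>s\<^sup>2 - 1\<bar> + m * r * (s\<^sup>2 - 1)\<^sup>2"
    unfolding expansion using b1 b2 by (rule order_trans[OF abs_triangle_ineq add_mono])
  also have "\<dots> = (\<bar>A\<bar> * \<bar>C\<bar> + m * C\<^sup>2) / r ^ 3"
    unfolding ss using r by (simp add: abs_div field_simps power2_eq_square power3_eq_cube)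
  also have "\<dots> \<le> 2 * (A\<^sup>2 + C\<^sup>2) / r ^ 3"
  proof -
    have "2 * (\<bar>A\<bar> * \<bar>C\<bar>) \<le> A\<^sup>2 + C\<^sup>2"
      using sum_squares_bound[of "\<bar>A\<bar>" "\<bar>C\<bar>"] by (simp add: mult.assoc)
    moreover have "m * C\<^sup>2 \<le> C\<^sup>2" using m by (simp add: mult_left_le_one_le)
    ultimately have "\<bar>A\<bar> * \<bar>C\<bar> + m * C\<^sup>2 \<le> 2 * (A\<^sup>2 + C\<^sup>2)"
      using zero_le_power2[of A] zero_le_mult_iff[of "\<bar>A\<bar>" "\<bar>C\<bar>"] by (smt (verit))
    then show ?thesis
      using r by (intro divide_right_mono) auto
  qed
  finally show ?thesis .
qed

subsection \<open>Moments of the standard normal law\<close>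

definition normal_abs_mean :: real where
  "normal_abs_mean = sqrt (2 / pi)"

lemma normal_abs_mean_pos: "0 < normal_abs_mean"
  by (simp add: normal_abs_mean_def)

lemma normal_abs_mean_le_1: "normal_abs_mean \<le> 1"
  using pi_gt3 by (simp add: normal_abs_mean_def)

lemma has_bochner_integral_std_normal_abs_poly:
  assumes "\<And>x. f x = a + b * \<bar>x\<bar> + c * \<bar>x\<bar>\<^sup>2 + d * \<bar>x\<bar> ^ 3 + e * \<bar>x\<bar> ^ 4"
    and "v = a + b * normal_abs_mean + c + d * (2 * normal_abs_mean) + e * 3"
  shows "has_bochner_integral std_normal_distribution f v"
proof -
  have from_lborel: "has_bochner_integral std_normal_distribution g w"
    if "has_bochner_integral lborel (\<lambda>x. std_normal_density x * g x) w" "g \<in> borel_measurable borel" for g w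
    by (rule has_bochner_integral_density) (use that in auto)
  have m0: "has_bochner_integral std_normal_distribution (\<lambda>x. 1) (1::real)"
    using std_normal_moment_even[of 0] by (intro from_lborel) auto
  have m1: "has_bochner_integral std_normal_distribution (\<lambda>x. \<bar>x\<bar>) normal_abs_mean"
    using std_normal_moment_abs_odd[of 0] by (intro from_lborel) (auto simp: normal_abs_mean_def)
  have m2: "has_bochner_integral std_normal_distribution (\<lambda>x. \<bar>x\<bar>\<^sup>2) 1"
    using std_normal_moment_even[of 1] by (intro from_lborel) auto
  have m3: "has_bochner_integral std_normal_distribution (\<lambda>x. \<bar>x\<bar> ^ 3) (2 * normal_abs_mean)"
    using std_normal_moment_abs_odd[of 1]
    by (intro from_lborel) (auto simp: normal_abs_mean_def mult.commute)
  have m4: "has_bochner_integral std_normal_distribution (\<lambda>x. \<bar>x\<bar> ^ 4) 3"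
    using std_normal_moment_even[of 2]
    by (intro from_lborel) (auto simp: power_even_abs_numeral fact_numeral)
  have "f = (\<lambda>x. a * 1 + b * \<bar>x\<bar> + c * \<bar>x\<bar>\<^sup>2 + d * \<bar>x\<bar> ^ 3 + e * \<bar>x\<bar> ^ 4)"
    using assms(1) by auto
  then show ?thesis
    unfolding assms(2)
    using has_bochner_integral_add[OF has_bochner_integral_add[OF has_bochner_integral_add[OF
        has_bochner_integral_add[OF has_bochner_integral_mult_right[OF m0]
          has_bochner_integral_mult_right[OF m1]] has_bochner_integral_mult_right[OF m2]]
        has_bochner_integral_mult_right[OF m3]] has_bochner_integral_mult_right[OF m4]]
    by simp
qed

definition centered_abs :: "real \<Rightarrow> real" where
  "centered_abs x = \<bar>x\<bar> - normal_abs_mean"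

definition centered_sq :: "real \<Rightarrow> real" where
  "centered_sq x = x\<^sup>2 - 1"

text \<open>The first order term of the width of a Gaussian sample, per coordinate.\<close>

definition width_summand :: "real \<Rightarrow> real" where
  "width_summand x = centered_abs x - (normal_abs_mean / 2) * centered_sq x"

lemma centered_abs_measurable[measurable]: "centered_abs \<in> borel_measurable borel"
  unfolding centered_abs_def by measurable

lemma centered_sq_measurable[measurable]: "centered_sq \<in> borel_measurable borel"
  unfolding centered_sq_def by measurable

lemma width_summand_measurable[measurable]: "width_summand \<in> borel_measurable borel"
  unfolding width_summand_def by measurable

lemma centered_abs_moments:
  "has_bochner_integral std_normal_distribution centered_abs 0"
  "has_bochner_integral std_normal_distribution (\<lambda>x. (centered_abs x)\<^sup>2) (1 - normal_abs_mean\<^sup>2)"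
  by (rule has_bochner_integral_std_normal_abs_poly[where a="- normal_abs_mean" and b=1 and c=0
        and d=0 and e=0]; simp add: centered_abs_def)
    (rule has_bochner_integral_std_normal_abs_poly[where a="normal_abs_mean\<^sup>2"
        and b="- 2 * normal_abs_mean" and c=1 and d=0 and e=0];
      simp add: centered_abs_def power2_eq_square algebra_simps)

lemma centered_sq_moments:
  "has_bochner_integral std_normal_distribution centered_sq 0"
  "has_bochner_integral std_normal_distribution (\<lambda>x. (centered_sq x)\<^sup>2) 2"
  by (rule has_bochner_integral_std_normal_abs_poly[where a="- 1" and b=0 and c=1 and d=0 and e=0];
      simp add: centered_sq_def)
    (rule has_bochner_integral_std_normal_abs_poly[where a=1 and b=0 and c="- 2" and d=0 and e=1];
      simp add: centered_sq_def power2_eq_square algebra_simps power4_eq_xxxx)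

lemma width_summand_moments:
  "has_bochner_integral std_normal_distribution width_summand 0"
  "has_bochner_integral std_normal_distribution (\<lambda>x. (width_summand x)\<^sup>2) ((pi - 3) / pi)"
proof -
  let ?m = normal_abs_mean
  show "has_bochner_integral std_normal_distribution width_summand 0"
    by (rule has_bochner_integral_std_normal_abs_poly[where a="- ?m / 2" and b=1 and c="- ?m / 2" and d=0 and e=0])
       (simp_all add: width_summand_def centered_abs_def centered_sq_def algebra_simps)
  show "has_bochner_integral std_normal_distribution (\<lambda>x. (width_summand x)\<^sup>2) ((pi - 3) / pi)"
  proof (rule has_bochner_integral_std_normal_abs_poly[where a="?m\<^sup>2 / 4" and b="- ?m"
        and c="1 + ?m\<^sup>2 / 2" and d="- ?m" and e="?m\<^sup>2 / 4"])
    fix x :: real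
    have "x\<^sup>2 = \<bar>x\<bar> * \<bar>x\<bar>" by (simp add: power2_eq_square abs_mult_self_eq)
    then show "(width_summand x)\<^sup>2 = ?m\<^sup>2 / 4 + - ?m * \<bar>x\<bar> + (1 + ?m\<^sup>2 / 2) * \<bar>x\<bar>\<^sup>2
        + - ?m * \<bar>x\<bar> ^ 3 + ?m\<^sup>2 / 4 * \<bar>x\<bar> ^ 4"
      unfolding width_summand_def centered_abs_def centered_sq_def
      by (simp add: power2_eq_square power3_eq_cube power4_eq_xxxx algebra_simps) (simp add: field_simps)
  next
    have "?m * (?m * pi) = 2"
      by (simp add: normal_abs_mean_def mult.assoc[symmetric])
    then show "(pi - 3) / pi = ?m\<^sup>2 / 4 + - ?m * ?m + (1 + ?m\<^sup>2 / 2) + - ?m * (2 * ?m) + ?m\<^sup>2 / 4 * 3"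
      using pi_gt3 by (simp add: power2_eq_square field_simps)
  qed
qed

abbreviation iid_normal :: "(nat \<Rightarrow> real) measure" where
  "iid_normal \<equiv> PiM UNIV (\<lambda>_::nat. std_normal_distribution)"

interpretation iid_normal: prob_space iid_normal
  by (intro prob_space_PiM prob_space_normal_density) simp

lemma iid_normal_component_measurable[measurable]: "(\<lambda>\<omega>. \<omega> i) \<in> borel_measurable iid_normal"
  using measurable_component_singleton[of i UNIV "\<lambda>_. std_normal_distribution"]
  by (simp cong: measurable_cong_sets)

lemma distr_iid_normal_component: "distr iid_normal borel (\<lambda>\<omega>. \<omega> i) = std_normal_distribution"
proof -
  have "distr iid_normal borel (\<lambda>\<omega>. \<omega> i) = distr iid_normal std_normal_distribution (\<lambda>\<omega>. \<omega> i)"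
    by (rule distr_cong) auto
  also have "\<dots> = std_normal_distribution"
    by (rule distr_PiM_component) (auto intro: prob_space_normal_density)
  finally show ?thesis .
qed

lemma has_bochner_integral_iid_normal_component:
  fixes g :: "real \<Rightarrow> real"
  assumes [measurable]: "g \<in> borel_measurable borel"
    and "has_bochner_integral std_normal_distribution g v"
  shows "has_bochner_integral iid_normal (\<lambda>\<omega>. g (\<omega> i)) v"
  using assms(2) integrable_distr_eq[of "\<lambda>\<omega>. \<omega> i" iid_normal borel g]
    integral_distr[of "\<lambda>\<omega>. \<omega> i" iid_normal borel g]
  by (simp add: distr_iid_normal_component has_bochner_integral_iff)

lemma indep_vars_iid_normal_components:
  "iid_normal.indep_vars (\<lambda>_. borel) (\<lambda>i \<omega>. \<omega> i) UNIV"
proof -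
  have "distr iid_normal (PiM UNIV (\<lambda>_. borel)) (\<lambda>x. \<lambda>i\<in>UNIV. x i) = iid_normal"
    unfolding restrict_UNIV by (rule distr_id2) (simp cong: sets_PiM_cong)
  then show ?thesis
    by (subst iid_normal.indep_vars_iff_distr_eq_PiM') (auto simp: distr_iid_normal_component)
qed

lemma has_bochner_integral_square_sum_iid_normal:
  fixes f :: "real \<Rightarrow> real"
  assumes [measurable]: "f \<in> borel_measurable borel"
    and mean: "has_bochner_integral std_normal_distribution f 0"
    and var: "has_bochner_integral std_normal_distribution (\<lambda>x. (f x)\<^sup>2) v"
  shows "has_bochner_integral iid_normal (\<lambda>\<omega>. (\<Sum>i<n. f (\<omega> i))\<^sup>2) (real n * v)"
proof -
  have indep: "iid_normal.indep_vars (\<lambda>_. borel) (\<lambda>k \<omega>. f (\<omega> k)) UNIV"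
    using indep_vars_iid_normal_components by (rule iid_normal.indep_vars_compose2) auto
  have mean_i: "has_bochner_integral iid_normal (\<lambda>\<omega>. f (\<omega> i)) 0" for i
    by (rule has_bochner_integral_iid_normal_component[OF _ mean]) simp
  have product: "has_bochner_integral iid_normal (\<lambda>\<omega>. f (\<omega> i) * f (\<omega> j)) (if i = j then v else 0)"
    for i j
  proof (cases "i = j")
    case True
    then show ?thesis
      using has_bochner_integral_iid_normal_component[OF _ var, of i] by (simp add: power2_eq_square)
  next
    case False
    have indep2: "iid_normal.indep_vars (\<lambda>_. borel) (\<lambda>k \<omega>. f (\<omega> k)) {i, j}"
      using indep by (rule iid_normal.indep_vars_subset) auto
    have integrable_i: "integrable iid_normal (\<lambda>\<omega>. f (\<omega> k))" for k
      using mean_i by (simp add: has_bochner_integral_iff)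
    have "integrable iid_normal (\<lambda>\<omega>. \<Prod>k\<in>{i, j}. f (\<omega> k))"
      by (rule iid_normal.indep_vars_integrable[OF _ indep2]) (auto intro: integrable_i)
    moreover have "(\<integral>\<omega>. (\<Prod>k\<in>{i, j}. f (\<omega> k)) \<partial>iid_normal) = (\<Prod>k\<in>{i, j}. \<integral>\<omega>. f (\<omega> k) \<partial>iid_normal)"
      by (rule iid_normal.indep_vars_lebesgue_integral[OF _ indep2]) (auto intro: integrable_i)
    ultimately show ?thesis
      using False mean_i by (simp add: has_bochner_integral_iff)
  qed
  have "(\<Sum>i<n. f (\<omega> i))\<^sup>2 = (\<Sum>i<n. \<Sum>j<n. f (\<omega> i) * f (\<omega> j))" for \<omega>
    by (simp add: power2_eq_square sum_product)
  moreover have "has_bochner_integral iid_normal (\<lambda>\<omega>. \<Sum>i<n. \<Sum>j<n. f (\<omega> i) * f (\<omega> j))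
      (\<Sum>i<n. \<Sum>j<n. if i = j then v else 0)"
    by (intro has_bochner_integral_sum product)
  ultimately show ?thesis by simp
qed

definition width_sd :: real where
  "width_sd = sqrt ((pi - 3) / pi)"

lemma width_sd_pos: "0 < width_sd"
  using pi_gt3 by (simp add: width_sd_def)

lemma clt_width_summand:
  "weak_conv_m (\<lambda>n. distr iid_normal borel (\<lambda>\<omega>. (\<Sum>i<n. width_summand (\<omega> i)) / sqrt (n * width_sd\<^sup>2)))
     std_normal_distribution"
proof (rule iid_normal.central_limit_theorem_zero_mean)
  have mean: "has_bochner_integral iid_normal (\<lambda>\<omega>. width_summand (\<omega> n)) 0"
    and square: "has_bochner_integral iid_normal (\<lambda>\<omega>. (width_summand (\<omega> n))\<^sup>2) ((pi - 3) / pi)" for n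
    using width_summand_moments by (auto intro: has_bochner_integral_iid_normal_component)
  show "iid_normal.indep_vars (\<lambda>i. borel) (\<lambda>i \<omega>. width_summand (\<omega> i)) UNIV"
    using indep_vars_iid_normal_components by (rule iid_normal.indep_vars_compose2) auto
  show "iid_normal.expectation (\<lambda>\<omega>. width_summand (\<omega> n)) = 0"
    and "integrable iid_normal (\<lambda>\<omega>. (width_summand (\<omega> n))\<^sup>2)"
    and "iid_normal.variance (\<lambda>\<omega>. width_summand (\<omega> n)) = width_sd\<^sup>2" for n
    using mean[of n] square[of n] pi_gt3 by (simp_all add: has_bochner_integral_iff width_sd_def)
  show "distr iid_normal borel (\<lambda>\<omega>. width_summand (\<omega> n)) = distr std_normal_distribution borel width_summand"
    for n
    by (subst distr_iid_normal_component[symmetric], subst distr_distr) (auto simp: comp_def)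
  show "0 < width_sd" by (rule width_sd_pos)
qed

subsection \<open>The width as a function of a Gaussian sample\<close>

definition gauss_width :: "nat \<Rightarrow> (nat \<Rightarrow> real) \<Rightarrow> real" where
  "gauss_width n \<omega> = (\<Sum>i<n. \<bar>\<omega> i\<bar>) / sqrt (\<Sum>i<n. (\<omega> i)\<^sup>2) - sqrt (2 * real n / pi)"

definition gauss_width_linear :: "nat \<Rightarrow> (nat \<Rightarrow> real) \<Rightarrow> real" where
  "gauss_width_linear n \<omega> = (\<Sum>i<n. width_summand (\<omega> i)) / sqrt (real n)"

lemma gauss_width_measurable[measurable]: "gauss_width n \<in> borel_measurable iid_normal"
  unfolding gauss_width_def by measurable

lemma gauss_width_linear_measurable[measurable]: "gauss_width_linear n \<in> borel_measurable iid_normal"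
  unfolding gauss_width_linear_def by measurable

lemma clt_gauss_width_linear:
  "weak_conv_m (\<lambda>n. distr iid_normal borel (\<lambda>\<omega>. gauss_width_linear n \<omega> / width_sd))
     std_normal_distribution"
proof -
  have "gauss_width_linear n \<omega> / width_sd = (\<Sum>i<n. width_summand (\<omega> i)) / sqrt (n * width_sd\<^sup>2)"
    for n \<omega>
    using width_sd_pos by (simp add: gauss_width_linear_def real_sqrt_mult)
  then show ?thesis
    by (simp only: clt_width_summand)
qed

lemma distr_width_cube_eq_gauss_width:
  assumes n: "1 \<le> n"
  shows "distr (uniform_sphere n) borel (\<lambda>U. width_cube n U - sqrt (2 * real n / pi))
       = distr iid_normal borel (gauss_width n)"
proof -
  let ?G = "PiM {..<n} (\<lambda>_::nat. std_normal_distribution)"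
  define W where "W U = (\<Sum>i<n. \<bar>U i\<bar>) - sqrt (2 * real n / pi)" for U :: "nat \<Rightarrow> real"
  have W_measurable[measurable]: "W \<in> borel_measurable (Rn n)"
    unfolding W_def by measurable
  interpret product_prob_space "\<lambda>_::nat. std_normal_distribution" UNIV
    by (intro product_prob_spaceI prob_space_normal_density) simp
  have proj_measurable: "sphere_proj n \<in> measurable ?G (Rn n)"
    by (simp add: measurable_cong_sets[OF sets_PiM_std_normal])
  have "distr (uniform_sphere n) borel (\<lambda>U. width_cube n U - sqrt (2 * real n / pi))
      = distr (distr ?G (Rn n) (sphere_proj n)) borel W"
    by (simp add: width_cube_eq_sum_abs W_def[abs_def] uniform_sphere_eq_distr_std_normal[OF n])
  also have "\<dots> = distr (distr iid_normal ?G (\<lambda>\<omega>. restrict \<omega> {..<n})) borel (\<lambda>x. W (sphere_proj n x))"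
    using proj_measurable by (subst distr_distr) (auto simp: comp_def distr_PiM_restrict_finite)
  also have "\<dots> = distr iid_normal borel (\<lambda>\<omega>. W (sphere_proj n (restrict \<omega> {..<n})))"
    using proj_measurable by (subst distr_distr) (auto simp: comp_def)
  also have "\<dots> = distr iid_normal borel (gauss_width n)"
  proof (rule distr_cong)
    fix \<omega> :: "nat \<Rightarrow> real"
    have "(\<Sum>i<n. \<bar>sphere_proj n (restrict \<omega> {..<n}) i\<bar>) = (\<Sum>i<n. \<bar>\<omega> i\<bar> / sqrt (\<Sum>i<n. (\<omega> i)\<^sup>2))"
      by (intro sum.cong) (auto simp: sphere_proj_def euclid_norm_def abs_div sum_nonneg)
    then show "W (sphere_proj n (restrict \<omega> {..<n})) = gauss_width n \<omega>"
      by (simp add: W_def gauss_width_def sum_divide_distrib)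
  qed auto
  finally show ?thesis .
qed

lemma gauss_width_error_cases:
  assumes n: "1 \<le> n" and err: "\<epsilon> \<le> \<bar>gauss_width n \<omega> - gauss_width_linear n \<omega>\<bar>"
  shows "(real n)\<^sup>2 / 4 \<le> (\<Sum>i<n. centered_sq (\<omega> i))\<^sup>2
    \<or> \<epsilon> * sqrt (real n) ^ 3 / 2 \<le> (\<Sum>i<n. centered_abs (\<omega> i))\<^sup>2 + (\<Sum>i<n. centered_sq (\<omega> i))\<^sup>2"
proof -
  let ?m = normal_abs_mean
  define r where "r = sqrt (real n)"
  define A where "A = (\<Sum>i<n. centered_abs (\<omega> i))"
  define C where "C = (\<Sum>i<n. centered_sq (\<omega> i))"
  have r: "0 < r" and r2: "r\<^sup>2 = real n" using n by (simp_all add: r_def)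
  have "gauss_width n \<omega> - gauss_width_linear n \<omega>
      = (A + r\<^sup>2 * ?m) / sqrt (C + r\<^sup>2) - ?m * r - (A - (?m / 2) * C) / r"
  proof -
    have "(\<Sum>i<n. \<bar>\<omega> i\<bar>) = A + r\<^sup>2 * ?m" "(\<Sum>i<n. (\<omega> i)\<^sup>2) = C + r\<^sup>2"
      by (simp_all add: A_def C_def r2 centered_abs_def centered_sq_def sum_subtractf)
    moreover have "(\<Sum>i<n. width_summand (\<omega> i)) = A - (?m / 2) * C"
      by (simp only: A_def C_def width_summand_def sum_subtractf sum_distrib_left)
    moreover have "sqrt (2 * real n / pi) = ?m * r"
      by (simp add: normal_abs_mean_def r_def real_sqrt_mult[symmetric])
    ultimately show ?thesis
      by (simp add: gauss_width_def gauss_width_linear_def r_def)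
  qed
  show ?thesis
  proof (cases "(real n)\<^sup>2 / 4 \<le> C\<^sup>2")
    case False
    then have "C\<^sup>2 \<le> (r\<^sup>2 / 2)\<^sup>2" by (simp add: r2 power_divide)
    then have "\<bar>C\<bar> \<le> \<bar>r\<^sup>2 / 2\<bar>" by (simp only: abs_le_square_iff)
    then have "\<bar>C\<bar> \<le> r\<^sup>2 / 2" by simp
    then have "\<epsilon> \<le> 2 * (A\<^sup>2 + C\<^sup>2) / r ^ 3"
      using err \<open>gauss_width n \<omega> - gauss_width_linear n \<omega> = _\<close>
        sqrt_ratio_expansion_bound[OF r _ less_imp_le[OF normal_abs_mean_pos] normal_abs_mean_le_1, of C A]
      by linarith
    then show ?thesis
      using r by (simp add: A_def C_def r_def le_divide_eq field_simps)
  qed (simp add: C_def)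
qed

lemma prob_gauss_width_error_le:
  assumes e: "0 < \<epsilon>" and n: "1 \<le> n"
  shows "iid_normal.prob {\<omega>\<in>space iid_normal. \<epsilon> \<le> \<bar>gauss_width n \<omega> - gauss_width_linear n \<omega>\<bar>}
       \<le> 8 / real n + 2 * (3 - normal_abs_mean\<^sup>2) / \<epsilon> * (1 / sqrt (real n))"
proof -
  define A where "A \<omega> = (\<Sum>i<n. centered_abs (\<omega> i))" for \<omega> :: "nat \<Rightarrow> real"
  define C where "C \<omega> = (\<Sum>i<n. centered_sq (\<omega> i))" for \<omega> :: "nat \<Rightarrow> real"
  have [measurable]: "A \<in> borel_measurable iid_normal" "C \<in> borel_measurable iid_normal"
    unfolding A_def C_def by measurable
  have A2: "has_bochner_integral iid_normal (\<lambda>\<omega>. (A \<omega>)\<^sup>2) (real n * (1 - normal_abs_mean\<^sup>2))"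
    unfolding A_def by (intro has_bochner_integral_square_sum_iid_normal centered_abs_moments) simp
  have C2: "has_bochner_integral iid_normal (\<lambda>\<omega>. (C \<omega>)\<^sup>2) (real n * 2)"
    unfolding C_def by (intro has_bochner_integral_square_sum_iid_normal centered_sq_moments) simp
  define E1 where "E1 = {\<omega>\<in>space iid_normal. (real n)\<^sup>2 / 4 \<le> (C \<omega>)\<^sup>2}"
  define E2 where "E2 = {\<omega>\<in>space iid_normal. \<epsilon> * sqrt (real n) ^ 3 / 2 \<le> (A \<omega>)\<^sup>2 + (C \<omega>)\<^sup>2}"
  have "iid_normal.prob E1 \<le> (\<integral>\<omega>. (C \<omega>)\<^sup>2 \<partial>iid_normal) / ((real n)\<^sup>2 / 4)"
    using C2 n unfolding E1_def
    by (intro integral_Markov_inequality_measure[where A="space iid_normal"])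
      (auto simp: has_bochner_integral_iff)
  also have "\<dots> = 8 / real n"
    using C2 n by (simp add: has_bochner_integral_iff power2_eq_square field_simps)
  finally have P1: "iid_normal.prob E1 \<le> 8 / real n" .
  have A2C2: "has_bochner_integral iid_normal (\<lambda>\<omega>. (A \<omega>)\<^sup>2 + (C \<omega>)\<^sup>2) (real n * (3 - normal_abs_mean\<^sup>2))"
    using has_bochner_integral_add[OF A2 C2] by (simp add: algebra_simps)
  have "iid_normal.prob E2 \<le> (\<integral>\<omega>. (A \<omega>)\<^sup>2 + (C \<omega>)\<^sup>2 \<partial>iid_normal) / (\<epsilon> * sqrt (real n) ^ 3 / 2)"
    using A2C2 n e unfolding E2_def
    by (intro integral_Markov_inequality_measure[where A="space iid_normal"])
      (auto simp: has_bochner_integral_iff)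
  also have "\<dots> = 2 * (3 - normal_abs_mean\<^sup>2) / \<epsilon> * (1 / sqrt (real n))"
    using A2C2 n e by (simp add: has_bochner_integral_iff power3_eq_cube field_simps)
  finally have P2: "iid_normal.prob E2 \<le> 2 * (3 - normal_abs_mean\<^sup>2) / \<epsilon> * (1 / sqrt (real n))" .
  have "{\<omega>\<in>space iid_normal. \<epsilon> \<le> \<bar>gauss_width n \<omega> - gauss_width_linear n \<omega>\<bar>} \<subseteq> E1 \<union> E2"
    using gauss_width_error_cases[OF n] by (auto simp: E1_def E2_def A_def C_def)
  then have "iid_normal.prob {\<omega>\<in>space iid_normal. \<epsilon> \<le> \<bar>gauss_width n \<omega> - gauss_width_linear n \<omega>\<bar>}
      \<le> iid_normal.prob E1 + iid_normal.prob E2"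
    by (intro order_trans[OF iid_normal.finite_measure_mono measure_subadditive])
      (auto simp: E1_def E2_def)
  then show ?thesis using P1 P2 by linarith
qed

lemma gauss_width_error_tendsto_0:
  assumes "0 < \<epsilon>"
  shows "(\<lambda>n. iid_normal.prob {\<omega>\<in>space iid_normal. \<epsilon> \<le> \<bar>gauss_width n \<omega> - gauss_width_linear n \<omega>\<bar>})
           \<longlonglongrightarrow> 0"
proof (rule tendsto_sandwich[OF _ _ tendsto_const])
  have "(\<lambda>n. 1 / sqrt (real n)) \<longlonglongrightarrow> 0"
    using tendsto_real_sqrt[OF lim_const_over_n[of 1]] by (simp add: real_sqrt_divide)
  then have "(\<lambda>n. 8 / real n + 2 * (3 - normal_abs_mean\<^sup>2) / \<epsilon> * (1 / sqrt (real n)))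
      \<longlonglongrightarrow> 0 + 2 * (3 - normal_abs_mean\<^sup>2) / \<epsilon> * 0"
    by (intro tendsto_add tendsto_mult tendsto_const lim_const_over_n)
  then show "(\<lambda>n. 8 / real n + 2 * (3 - normal_abs_mean\<^sup>2) / \<epsilon> * (1 / sqrt (real n))) \<longlonglongrightarrow> 0"
    by simp
  show "eventually (\<lambda>n. iid_normal.prob {\<omega>\<in>space iid_normal. \<epsilon> \<le> \<bar>gauss_width n \<omega> - gauss_width_linear n \<omega>\<bar>}
      \<le> 8 / real n + 2 * (3 - normal_abs_mean\<^sup>2) / \<epsilon> * (1 / sqrt (real n))) sequentially"
    using prob_gauss_width_error_le[OF assms] by (intro eventually_sequentiallyI[of 1])
qed simp

theorem theorem3p2:
  shows "weak_conv_m
           (\<lambda>n. distr (uniform_sphere n) borel (\<lambda>U. width_cube n U - sqrt (2 * real n / pi)))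
           (density lborel (normal_density 0 (sqrt ((pi - 3) / pi))))"
proof -
  have "weak_conv_m (\<lambda>n. distr iid_normal borel (gauss_width n))
      (density lborel (\<lambda>x. ennreal (normal_density 0 width_sd x)))"
  proof (rule iid_normal.slutsky_normal[OF width_sd_pos _ _ clt_gauss_width_linear])
    show "(\<lambda>n. iid_normal.prob {\<omega>\<in>space iid_normal. e \<le> \<bar>gauss_width n \<omega> - gauss_width_linear n \<omega>\<bar>})
        \<longlonglongrightarrow> 0" if "0 < e" for e
      using that by (rule gauss_width_error_tendsto_0)
  qed (fact gauss_width_measurable gauss_width_linear_measurable)+
  moreover have "eventually (\<lambda>n. distr iid_normal borel (gauss_width n)
      = distr (uniform_sphere n) borel (\<lambda>U. width_cube n U - sqrt (2 * real n / pi))) sequentially"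
    using distr_width_cube_eq_gauss_width by (intro eventually_sequentiallyI[of 1]) simp
  ultimately show ?thesis
    unfolding width_sd_def by (rule weak_conv_m_eventually_cong)
qed

end
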